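(* Let $n\geq 1$. Among all topological trees with exactly $n$ leaves, the star $K_{1,n}$ is the one with the smallest Matula number. Moreover, $M(K_{1,n})=2^n$ for all $n>1$.
   Context: Let $p_m$ denote the $m$-th prime number ($p_1=2,p_2=3,p_3=5,\ldots$). All trees are rooted. The branches of a rooted tree $T$ are the components (rooted at the children of the root) that remain after deleting the root of $T$ and its incident edges. The Matula number $M(T)$ of a rooted tree is defined recursively: $M(K_1)=1$ for the one-vertex tree, and if $T$ has branches $T_1,\ldots,T_r$ then $M(T)=p_{M(T_1)}\cdot p_{M(T_2)}\cdots p_{M(T_r)}$. A leaf is a vertex of outdegree $0$ (so the one-vertex tree has one leaf). A topological tree is a rooted tree with no vertex of outdegree $1$. The star $K_{1,n}$ is the rooted tree consisting of a root with $n$ leaves attached directly to it. *)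

theory Defs
  imports "HOL-Computational_Algebra.Primes" "HOL-Library.Multiset"
begin

datatype rtree = Node "rtree multiset"

text \<open>The m-th prime, 1-indexed: p 1 = 2, p 2 = 3, ... (p is the unique prime with exactly
  m - 1 primes below it).\<close>
definition nth_prime :: "nat \<Rightarrow> nat" where
  "nth_prime m = (THE p. prime p \<and> card {q. prime q \<and> q < p} = m - 1)"

primrec matula :: "rtree \<Rightarrow> nat" where
  "matula (Node cs) = prod_mset (image_mset (\<lambda>c. nth_prime (matula c)) cs)"

primrec leaves :: "rtree \<Rightarrow> nat" where
  "leaves (Node cs) = (if cs = {#} then 1 else sum_mset (image_mset leaves cs))"

primrec topological :: "rtree \<Rightarrow> bool" where
  "topological (Node cs) = (size cs \<noteq> 1 \<and> (\<forall>b \<in># image_mset topological cs. b))"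

definition star :: "nat \<Rightarrow> rtree" where
  "star n = Node (replicate_mset n (Node {#}))"

end

(* Every topological tree T other than a single vertex satisfies 2 ^ leaves T \<le> M(T), by
   induction over the branches: a leaf branch contributes the factor p_1 = 2 = 2 ^ 1, and any
   other branch c contributes p_M(c) > M(c) \<ge> 2 ^ leaves c.  Since the leaves of T are the sum
   of the leaves of its branches, the bound is strict as soon as one branch is not a leaf, and
   the only tree all of whose branches are leaves is the star, with Matula number 2 ^ n. *)
theory Submission
  imports Defs "HOL-Library.Infinite_Set"
begin

lemma card_less_enumerate:
  fixes S :: "nat set"
  assumes "infinite S"
  shows "card {s \<in> S. s < enumerate S n} = n"
proof -
  have "{s \<in> S. s < enumerate S n} = enumerate S ` {..<n}"
  proof (intro equalityI subsetI)
    fix s assume "s \<in> {s \<in> S. s < enumerate S n}"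
    moreover obtain k where "enumerate S k = s"
      using enumerate_Ex[OF assms] calculation by blast
    ultimately show "s \<in> enumerate S ` {..<n}"
      using assms by auto
  qed (use assms enumerate_in_set in auto)
  then show ?thesis
    using assms by (simp add: card_image inj_on_subset[OF inj_enumerate])
qed

lemma card_primes_less_strict_mono:
  fixes p p' :: nat
  assumes "prime p" "p < p'"
  shows "card {q. prime q \<and> q < p} < card {q. prime q \<and> q < p'}"
proof (rule psubset_card_mono)
  show "finite {q. prime q \<and> q < p'}"
    by simp
  show "{q. prime q \<and> q < p} \<subset> {q. prime q \<and> q < p'}"
    using assms by auto
qed

lemma ex1_prime_card_primes_less: "\<exists>!p::nat. prime p \<and> card {q. prime q \<and> q < p} = k"
proof (rule ex_ex1I)
  let ?p = "enumerate {p::nat. prime p} k"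
  have "prime ?p"
    using enumerate_in_set[OF primes_infinite] by simp
  moreover have "card {q. prime q \<and> q < ?p} = k"
    using card_less_enumerate[OF primes_infinite, of k] by simp
  ultimately show "\<exists>p::nat. prime p \<and> card {q. prime q \<and> q < p} = k"
    by blast
next
  fix p p' :: nat
  assume "prime p \<and> card {q. prime q \<and> q < p} = k"
    and "prime p' \<and> card {q. prime q \<and> q < p'} = k"
  then show "p = p'"
    using card_primes_less_strict_mono[of p p'] card_primes_less_strict_mono[of p' p]
    by (cases p p' rule: linorder_cases) auto
qed

lemma
  shows prime_nth_prime: "prime (nth_prime m)"
    and card_primes_less_nth_prime: "card {q. prime q \<and> q < nth_prime m} = m - 1"
  using theI'[OF ex1_prime_card_primes_less] by (simp_all add: nth_prime_def)

lemma nth_prime_Suc_0 [simp]: "nth_prime (Suc 0) = 2"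
proof (rule ccontr)
  assume "nth_prime (Suc 0) \<noteq> 2"
  with prime_ge_2_nat[OF prime_nth_prime] have "2 < nth_prime (Suc 0)"
    by (simp add: order_less_le)
  then have "2 \<in> {q. prime q \<and> q < nth_prime (Suc 0)}"
    by simp
  moreover have "finite {q. prime q \<and> q < nth_prime (Suc 0)}"
    by simp
  ultimately show False
    using card_primes_less_nth_prime[of "Suc 0"] by (auto simp: card_eq_0_iff)
qed

lemma less_nth_prime:
  assumes "0 < m"
  shows "m < nth_prime m"
proof -
  have "{q. prime q \<and> q < nth_prime m} \<subseteq> {2..<nth_prime m}"
    using prime_ge_2_nat by auto
  then have "card {q. prime q \<and> q < nth_prime m} \<le> card {2..<nth_prime m}"
    by (rule card_mono[rotated]) simp
  then have "m - 1 \<le> nth_prime m - 2"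
    by (simp add: card_primes_less_nth_prime)
  then show ?thesis
    using assms prime_ge_2_nat[OF prime_nth_prime[of m]] by linarith
qed

lemma prod_mset_nonneg:
  fixes f :: "'a \<Rightarrow> 'b::linordered_semidom"
  shows "(\<And>x. x \<in># M \<Longrightarrow> 0 \<le> f x) \<Longrightarrow> 0 \<le> (\<Prod>x\<in>#M. f x)"
  by (induction M) auto

lemma prod_mset_pos:
  fixes f :: "'a \<Rightarrow> 'b::linordered_semidom"
  shows "(\<And>x. x \<in># M \<Longrightarrow> 0 < f x) \<Longrightarrow> 0 < (\<Prod>x\<in>#M. f x)"
  by (induction M) auto

lemma prod_mset_mono:
  fixes f g :: "'a \<Rightarrow> 'b::linordered_semidom"
  assumes "\<And>x. x \<in># M \<Longrightarrow> 0 \<le> f x \<and> f x \<le> g x"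
  shows "(\<Prod>x\<in>#M. f x) \<le> (\<Prod>x\<in>#M. g x)"
  using assms
proof (induction M)
  case (add x M)
  have "0 \<le> (\<Prod>x\<in>#M. f x)"
    using add.prems by (intro prod_mset_nonneg) simp
  moreover have "(\<Prod>x\<in>#M. f x) \<le> (\<Prod>x\<in>#M. g x)"
    using add by simp
  moreover have "0 \<le> f x" "f x \<le> g x"
    using add.prems by simp_all
  ultimately have "f x * (\<Prod>x\<in>#M. f x) \<le> g x * (\<Prod>x\<in>#M. g x)"
    by (intro mult_mono) auto
  then show ?case
    by simp
qed simp

lemma prod_mset_strict_mono:
  fixes f g :: "'a \<Rightarrow> 'b::linordered_semidom"
  assumes "x \<in># M" "f x < g x" "\<And>y. y \<in># M \<Longrightarrow> 0 < f y \<and> f y \<le> g y"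
  shows "(\<Prod>x\<in>#M. f x) < (\<Prod>x\<in>#M. g x)"
proof -
  obtain M' where M: "M = add_mset x M'"
    using assms(1) by (metis multi_member_split)
  have "0 < (\<Prod>x\<in>#M'. f x)"
    using assms(3) M by (intro prod_mset_pos) simp
  then have "f x * (\<Prod>x\<in>#M'. f x) < g x * (\<Prod>x\<in>#M'. f x)"
    by (rule mult_strict_right_mono[OF assms(2)])
  also have "\<dots> \<le> g x * (\<Prod>x\<in>#M'. g x)"
    using assms M less_trans[of 0 "f x" "g x"]
    by (intro mult_left_mono prod_mset_mono) (auto simp: less_imp_le)
  finally show ?thesis
    using M by simp
qed

lemma power_sum_mset: "c ^ (\<Sum>x\<in>#M. f x) = (\<Prod>x\<in>#M. c ^ f x)"
  by (induction M) (simp_all add: power_add)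

abbreviation leaf :: rtree where
  "leaf \<equiv> Node {#}"

lemma matula_pos: "0 < matula T"
  by (cases T) (auto simp: prime_gt_0_nat[OF prime_nth_prime] prod_mset_pos)

lemma two_pow_leaves_le_matula:
  assumes "topological T" "T \<noteq> leaf"
  shows "2 ^ leaves T \<le> matula T"
  using assms
proof (induction T)
  case (Node cs)
  have "2 ^ leaves c \<le> nth_prime (matula c)" if "c \<in># cs" for c
  proof (cases "c = leaf")
    case False
    then have "2 ^ leaves c \<le> matula c"
      using Node that by auto
    also have "\<dots> < nth_prime (matula c)"
      using less_nth_prime matula_pos by blast
    finally show ?thesis by simp
  qed simp
  then show ?case
    using Node.prems by (simp add: power_sum_mset prod_mset_mono)
qed

lemma two_pow_leaves_less_nth_prime_matula:
  assumes "topological T" "T \<noteq> leaf"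
  shows "2 ^ leaves T < nth_prime (matula T)"
  using two_pow_leaves_le_matula[OF assms] less_nth_prime[OF matula_pos]
  by (rule order.strict_trans1)

lemma two_pow_leaves_le_nth_prime_matula:
  assumes "topological T"
  shows "2 ^ leaves T \<le> nth_prime (matula T)"
  using two_pow_leaves_less_nth_prime_matula[OF assms] by (cases "T = leaf") auto

lemma two_pow_leaves_less_matula:
  assumes "topological (Node cs)" "c \<in># cs" "c \<noteq> leaf"
  shows "2 ^ leaves (Node cs) < matula (Node cs)"
proof -
  have "2 ^ leaves (Node cs) = (\<Prod>c\<in>#cs. 2 ^ leaves c :: nat)"
    using assms(2) by (auto simp: power_sum_mset)
  also have "\<dots> < matula (Node cs)"
    unfolding matula.simps image_mset.compositionality o_def
    using assms by (intro prod_mset_strict_mono)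
      (auto simp: two_pow_leaves_less_nth_prime_matula two_pow_leaves_le_nth_prime_matula)
  finally show ?thesis .
qed

lemma Node_eq_star_leaves:
  assumes "\<And>c. c \<in># cs \<Longrightarrow> c = leaf" "cs \<noteq> {#}"
  shows "Node cs = star (leaves (Node cs))"
proof -
  have "cs = replicate_mset (size cs) leaf"
    using assms(1) by (intro set_mset_subset_singletonD) blast
  then obtain k where "cs = replicate_mset k leaf" "0 < k"
    using assms(2) by (metis size_eq_0_iff_empty gr0I)
  then show ?thesis
    by (simp add: star_def)
qed

lemma topological_star: "n \<noteq> 1 \<Longrightarrow> topological (star n)"
  by (simp add: star_def)

lemma leaves_star: "0 < n \<Longrightarrow> leaves (star n) = n"
  by (simp add: star_def)

lemma matula_star: "matula (star n) = 2 ^ n"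
  by (simp add: star_def)

theorem mainTheorem1:
  fixes n :: nat
  assumes "n \<ge> 2"
  shows "topological (star n) \<and> leaves (star n) = n
    \<and> (\<forall>T. topological T \<and> leaves T = n \<and> T \<noteq> star n \<longrightarrow> matula (star n) < matula T)
    \<and> matula (star n) = 2 ^ n"
proof -
  have "matula (star n) < matula T"
    if T: "topological T" "leaves T = n" "T \<noteq> star n" for T
  proof -
    obtain cs where cs: "T = Node cs"
      by (cases T)
    with T assms have "cs \<noteq> {#}"
      by auto
    with T cs obtain c where "c \<in># cs" "c \<noteq> leaf"
      using Node_eq_star_leaves by blast
    with T cs show ?thesis
      using two_pow_leaves_less_matula matula_star by metis
  qed
  with assms show ?thesis
    by (simp add: topological_star leaves_star matula_star)
qed

end
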